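(* Let $\lambda\in\Pi(\mu_1,\ldots,\mu_N)$ and let $\lambda_j=\pi_{\mathcal{P}_j}\#\lambda$ for $j\in\{1,\dots,N\}$. If $\lambda$ is an extreme point of $\Pi(\lambda_{N-1},\mu_N)$ and, for every $j\in\{2,\ldots,N-1\}$, $\lambda_j$ is an extreme point of $\Pi(\lambda_{j-1},\mu_j)$, then $\lambda$ is an extreme point of $\Pi(\mu_1,\ldots,\mu_N)$.
   Context: $N\ge3$; $\mu_k$ are Borel probability measures on complete separable metric spaces $X_k$, $k=1,\dots,N$. $\Pi(\mu_1,\ldots,\mu_N)$ is the convex set of Borel probability measures on $\prod_{k=1}^NX_k$ with $k$-th marginal $\mu_k$. For $j\in\{1,\dots,N\}$, $\pi_{\mathcal{P}_j}:\prod_{k=1}^NX_k\to\prod_{k=1}^jX_k$ is the projection onto the first $j$ coordinates (so $\lambda_1=\mu_1$, $\lambda_N=\lambda$). Writing $\prod_{k=1}^jX_k=Z_j\times X_j$ with $Z_j=\prod_{k=1}^{j-1}X_k$, $\Pi(\lambda_{j-1},\mu_j)$ denotes the set of Borel probability measures on $Z_j\times X_j$ with marginals $\lambda_{j-1}$ on $Z_j$ and $\mu_j$ on $X_j$. An extreme point of a convex set $K$ is a point not expressible as $t\alpha+(1-t)\beta$ with $\alpha\neq\beta$ in $K$, $t\in(0,1)$. *)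

theory Defs
  imports "HOL-Analysis.Analysis" "HOL-Probability.Probability"
begin

definition borel_of :: "'a topology \<Rightarrow> 'a measure" where
  "borel_of T = sigma (topspace T) {U. openin T U}"

definition polish_metric :: "'a metric \<Rightarrow> bool" where
  "polish_metric m \<longleftrightarrow> mcomplete_of m \<and> separable_space (mtopology_of m)"

definition Xsp :: "('i \<Rightarrow> 'a metric) \<Rightarrow> 'i \<Rightarrow> 'a measure" where
  "Xsp X k = borel_of (mtopology_of (X k))"

definition couplings :: "(nat \<Rightarrow> 'a metric) \<Rightarrow> nat \<Rightarrow> (nat \<Rightarrow> 'a measure) \<Rightarrow> (nat \<Rightarrow> 'a) measure set" where
  "couplings X N mu = {P. prob_space P \<and> sets P = sets (PiM {1..N} (Xsp X)) \<and>
      (\<forall>k\<in>{1..N}. distr P (Xsp X k) (\<lambda>x. x k) = mu k)}"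

definition proj_first :: "nat \<Rightarrow> (nat \<Rightarrow> 'a) \<Rightarrow> (nat \<Rightarrow> 'a)" where
  "proj_first j x = restrict x {1..j}"

text \<open>Pi(nu, mu_j): Borel probability measures on Z_j x X_j = prod_{k in {1..j}} X_k
  with marginal nu on Z_j = prod_{k in {1..j-1}} X_k and marginal m on X_j.\<close>
definition couplings2 :: "(nat \<Rightarrow> 'a metric) \<Rightarrow> nat \<Rightarrow> (nat \<Rightarrow> 'a) measure \<Rightarrow> 'a measure \<Rightarrow> (nat \<Rightarrow> 'a) measure set" where
  "couplings2 X j nu m = {P. prob_space P \<and> sets P = sets (PiM {1..j} (Xsp X)) \<and>
      distr P (PiM {1..j-1} (Xsp X)) (proj_first (j-1)) = nu \<and>
      distr P (Xsp X j) (\<lambda>x. x j) = m}"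

definition mix_measure :: "real \<Rightarrow> 'b measure \<Rightarrow> 'b measure \<Rightarrow> 'b measure" where
  "mix_measure t a b = measure_of (space a) (sets a)
      (\<lambda>A. ennreal t * emeasure a A + ennreal (1 - t) * emeasure b A)"

definition is_extreme_point :: "'b measure set \<Rightarrow> 'b measure \<Rightarrow> bool" where
  "is_extreme_point KK nu \<longleftrightarrow> nu \<in> KK \<and>
     \<not> (\<exists>al\<in>KK. \<exists>be\<in>KK. \<exists>t. 0 < (t::real) \<and> t < 1 \<and> al \<noteq> be \<and> nu = mix_measure t al be)"

end

theory Submission
  imports Defs
begin

text \<open>If \<open>\<lambda> = t \<alpha> + (1 - t) \<beta>\<close> with \<open>\<alpha>, \<beta> \<in> \<Pi>(\<mu>\<^sub>1, \<dots>, \<mu>\<^sub>N)\<close>, then the projections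
  \<open>\<alpha>\<^sub>j, \<beta>\<^sub>j\<close> onto the first \<open>j\<close> coordinates satisfy \<open>\<lambda>\<^sub>j = t \<alpha>\<^sub>j + (1 - t) \<beta>\<^sub>j\<close>. By induction
  on \<open>j\<close> they all coincide with \<open>\<lambda>\<^sub>j\<close>: for \<open>j = 1\<close> each of them is \<open>\<mu>\<^sub>1\<close>, and if
  \<open>\<alpha>\<^sub>j\<^sub>-\<^sub>1 = \<beta>\<^sub>j\<^sub>-\<^sub>1 = \<lambda>\<^sub>j\<^sub>-\<^sub>1\<close>, then \<open>\<alpha>\<^sub>j, \<beta>\<^sub>j \<in> \<Pi>(\<lambda>\<^sub>j\<^sub>-\<^sub>1, \<mu>\<^sub>j)\<close>, so extremality of \<open>\<lambda>\<^sub>j\<close> there forces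
  \<open>\<alpha>\<^sub>j = \<beta>\<^sub>j = \<lambda>\<^sub>j\<close>. At \<open>j = N - 1\<close> this puts \<open>\<alpha>\<close> and \<open>\<beta>\<close> themselves into \<open>\<Pi>(\<lambda>\<^sub>N\<^sub>-\<^sub>1, \<mu>\<^sub>N)\<close>,
  where \<open>\<lambda>\<close> is extreme, hence \<open>\<alpha> = \<beta>\<close>.\<close>

lemma space_mix_measure [simp]: "space (mix_measure t a b) = space a"
  by (simp add: mix_measure_def)

lemma sets_mix_measure [simp]: "sets (mix_measure t a b) = sets a"
  by (simp add: mix_measure_def)

lemma emeasure_mix_measure:
  assumes "sets b = sets a"
  shows "emeasure (mix_measure t a b) A = ennreal t * emeasure a A + ennreal (1 - t) * emeasure b A"
    (is "_ = ?\<mu> A")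
proof (cases "A \<in> sets a")
  case True
  show ?thesis unfolding mix_measure_def
  proof (rule emeasure_measure_of_sigma)
    show "sigma_algebra (space a) (sets a)" ..
    show "positive (sets a) ?\<mu>" by (simp add: positive_def)
    show "countably_additive (sets a) ?\<mu>"
    proof (rule countably_additiveI)
      fix A :: "nat \<Rightarrow> _"
      assume A: "range A \<subseteq> sets a" "disjoint_family A"
      have "(\<Sum>i. ?\<mu> (A i)) =
          ennreal t * (\<Sum>i. emeasure a (A i)) + ennreal (1 - t) * (\<Sum>i. emeasure b (A i))"
        by (simp add: suminf_add[symmetric])
      also have "\<dots> = ?\<mu> (\<Union>i. A i)" using A assms by (simp add: suminf_emeasure)
      finally show "(\<Sum>i. ?\<mu> (A i)) = ?\<mu> (\<Union>i. A i)" .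
    qed
  qed (fact True)
next
  case False
  then show ?thesis using assms by (simp add: emeasure_notin_sets)
qed

lemma mix_measure_same:
  assumes "0 \<le> t" "t \<le> 1"
  shows "mix_measure t a a = a"
proof (rule measure_eqI)
  fix A
  have "ennreal t * emeasure a A + ennreal (1 - t) * emeasure a A =
      (ennreal t + ennreal (1 - t)) * emeasure a A"
    by (simp add: distrib_right)
  also have "ennreal t + ennreal (1 - t) = 1" using assms by (simp add: ennreal_plus[symmetric])
  finally show "emeasure (mix_measure t a a) A = emeasure a A" by (simp add: emeasure_mix_measure)
qed simp

lemma distr_mix_measure:
  assumes f: "f \<in> measurable a M" and sets_eq: "sets b = sets a"
  shows "distr (mix_measure t a b) M f = mix_measure t (distr a M f) (distr b M f)"
proof (rule measure_eqI)
  fix A assume "A \<in> sets (distr (mix_measure t a b) M f)"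
  moreover have "f \<in> measurable (mix_measure t a b) M"
    using f measurable_cong_sets[of "mix_measure t a b" a M M] by simp
  moreover have "f \<in> measurable b M" using f measurable_cong_sets[OF sets_eq refl] by metis
  moreover have "space b = space a" using sets_eq by (rule sets_eq_imp_space_eq)
  ultimately show "emeasure (distr (mix_measure t a b) M f) A =
      emeasure (mix_measure t (distr a M f) (distr b M f)) A"
    using f sets_eq by (simp add: emeasure_distr emeasure_mix_measure)
qed simp

lemma extreme_point_mix_eq:
  assumes "is_extreme_point K \<nu>" "a \<in> K" "b \<in> K" "0 < t" "t < 1" "\<nu> = mix_measure t a b"
  shows "a = b"
  using assms unfolding is_extreme_point_def by blast

lemma extreme_point_mix_eq_point:
  assumes "is_extreme_point K \<nu>" "a \<in> K" "b \<in> K" "0 < t" "t < 1" "\<nu> = mix_measure t a b"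
  shows "a = \<nu>" "b = \<nu>"
  using extreme_point_mix_eq[OF assms] assms(4-6) by (simp_all add: mix_measure_same)

lemma proj_first_proj_first: "i \<le> j \<Longrightarrow> proj_first i (proj_first j x) = proj_first i x"
  unfolding proj_first_def by (auto simp: restrict_def)

lemma measurable_proj_first:
  assumes "sets P = sets (PiM {1..N} M)" "j \<le> N"
  shows "proj_first j \<in> measurable P (PiM {1..j} M)"
proof -
  have "(\<lambda>f. restrict f {1..j}) \<in> measurable (PiM {1..N} M) (PiM {1..j} M)"
    using assms(2) by (intro measurable_restrict_subset) auto
  then show ?thesis unfolding proj_first_def using measurable_cong_sets[OF assms(1) refl] by metis
qed

lemma measurable_coordinate:
  assumes "sets P = sets (PiM {1..N} M)" "k \<in> {1..N}"
  shows "(\<lambda>x. x k) \<in> measurable P (M k)"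
  using measurable_cong_sets[OF assms(1) refl] measurable_component_singleton[OF assms(2), of M]
  by auto

lemma distr_proj_first_self:
  assumes "sets P = sets (PiM {1..N} M)"
  shows "distr P (PiM {1..N} M) (proj_first N) = P"
proof -
  have "distr P (PiM {1..N} M) (proj_first N) = distr P P (\<lambda>x. x)"
  proof (rule distr_cong_AE)
    show "AE x in P. proj_first N x = x"
    proof (rule AE_I2)
      fix x assume "x \<in> space P"
      then have "x \<in> space (PiM {1..N} M)" using sets_eq_imp_space_eq[OF assms] by simp
      then show "proj_first N x = x"
        by (auto simp: proj_first_def space_PiM PiE_def extensional_def restrict_def)
    qed
  qed (use measurable_proj_first[OF assms order_refl] in \<open>auto simp: assms\<close>)
  then show ?thesis by simp
qed

lemma distr_proj_first_one:
  assumes "sets P = sets (PiM {1..N} M)" "1 \<le> N"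
  shows "distr P (PiM {1..1} M) (proj_first 1) =
    distr (distr P (M 1) (\<lambda>x. x 1)) (PiM {1..1} M) (\<lambda>y. \<lambda>k\<in>{1..1}. y)"
proof -
  have "(\<lambda>x. x 1) \<in> measurable P (M 1)"
    using measurable_coordinate[OF assms(1)] assms(2) by simp
  moreover have "(\<lambda>y. \<lambda>k\<in>{1..1}. y) \<in> measurable (M 1) (PiM {1..1} M)"
    by (rule measurable_restrict) auto
  moreover have "(\<lambda>y. \<lambda>k\<in>{1..1}. y) \<circ> (\<lambda>x. x 1) = proj_first 1"
    by (rule ext) (auto simp: proj_first_def restrict_def)
  ultimately show ?thesis by (metis distr_distr)
qed

lemma distr_proj_first_in_couplings2:
  assumes P: "P \<in> couplings X N mu" and j: "1 \<le> j" "j \<le> N"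
  shows "distr P (PiM {1..j} (Xsp X)) (proj_first j) \<in>
    couplings2 X j (distr P (PiM {1..j-1} (Xsp X)) (proj_first (j-1))) (mu j)"
proof -
  have sets_P: "sets P = sets (PiM {1..N} (Xsp X))"
    using P by (simp add: couplings_def)
  have pj: "proj_first j \<in> measurable P (PiM {1..j} (Xsp X))"
    using measurable_proj_first[OF sets_P j(2)] .
  have "distr (distr P (PiM {1..j} (Xsp X)) (proj_first j)) (PiM {1..j-1} (Xsp X)) (proj_first (j-1))
      = distr P (PiM {1..j-1} (Xsp X)) (proj_first (j-1) \<circ> proj_first j)"
    by (rule distr_distr[OF measurable_proj_first[OF refl] pj]) simp
  also have "proj_first (j-1) \<circ> proj_first j = proj_first (j-1)"
    by (rule ext) (simp add: proj_first_proj_first)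
  finally have marginal_first: "distr (distr P (PiM {1..j} (Xsp X)) (proj_first j))
      (PiM {1..j-1} (Xsp X)) (proj_first (j-1)) = distr P (PiM {1..j-1} (Xsp X)) (proj_first (j-1))" .
  have "distr (distr P (PiM {1..j} (Xsp X)) (proj_first j)) (Xsp X j) (\<lambda>x. x j)
      = distr P (Xsp X j) ((\<lambda>x. x j) \<circ> proj_first j)"
    using j by (intro distr_distr[OF measurable_coordinate[OF refl] pj]) simp
  also have "(\<lambda>x. x j) \<circ> proj_first j = (\<lambda>x. x j)"
    using j by (auto simp: proj_first_def)
  finally have marginal_last: "distr (distr P (PiM {1..j} (Xsp X)) (proj_first j)) (Xsp X j) (\<lambda>x. x j) = mu j"
    using P j by (simp add: couplings_def)
  have "prob_space (distr P (PiM {1..j} (Xsp X)) (proj_first j))"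
    using P pj by (simp add: couplings_def prob_space.prob_space_distr)
  then show ?thesis using marginal_first marginal_last by (simp add: couplings2_def)
qed

lemma couplings_in_couplings2:
  assumes "P \<in> couplings X N mu" "1 \<le> N"
  shows "P \<in> couplings2 X N (distr P (PiM {1..N-1} (Xsp X)) (proj_first (N-1))) (mu N)"
  using distr_proj_first_in_couplings2[OF assms order_refl] assms(1)
    distr_proj_first_self[of P N "Xsp X"]
  by (simp add: couplings_def)

lemma proj_first_eq_of_mix_couplings:
  fixes X :: "nat \<Rightarrow> 'a metric"
  assumes al: "al \<in> couplings X N mu" and be: "be \<in> couplings X N mu"
    and t: "0 < t" "t < 1" and lam: "lam = mix_measure t al be"
    and extreme: "\<forall>j\<in>{2..m}. is_extreme_point
           (couplings2 X j (distr lam (PiM {1..j-1} (Xsp X)) (proj_first (j-1))) (mu j))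
           (distr lam (PiM {1..j} (Xsp X)) (proj_first j))"
    and j: "1 \<le> j" "j \<le> m" and m: "m \<le> N"
  shows "distr al (PiM {1..j} (Xsp X)) (proj_first j) = distr lam (PiM {1..j} (Xsp X)) (proj_first j) \<and>
    distr be (PiM {1..j} (Xsp X)) (proj_first j) = distr lam (PiM {1..j} (Xsp X)) (proj_first j)"
proof -
  let ?pr = "\<lambda>P k. distr P (PiM {1..k} (Xsp X)) (proj_first k)"
  have sets_al: "sets al = sets (PiM {1..N} (Xsp X))" and sets_be: "sets be = sets al"
    using al be by (simp_all add: couplings_def)
  have lam_proj: "?pr lam k = mix_measure t (?pr al k) (?pr be k)" if "k \<le> N" for k
    unfolding lam using that by (intro distr_mix_measure[OF measurable_proj_first[OF sets_al] sets_be])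
  from j show ?thesis
  proof (induction j rule: dec_induct)
    case base
    have "distr al (Xsp X 1) (\<lambda>x. x 1) = distr be (Xsp X 1) (\<lambda>x. x 1)"
      using al be j m by (simp add: couplings_def)
    then have "?pr al 1 = ?pr be 1"
      using al be j m distr_proj_first_one[of al N "Xsp X"] distr_proj_first_one[of be N "Xsp X"]
      by (simp only: couplings_def mem_Collect_eq)
    then show ?case using lam_proj[of 1] t j m by (simp add: mix_measure_same)
  next
    case (step i)
    have in_K: "?pr al (Suc i) \<in> couplings2 X (Suc i) (?pr lam i) (mu (Suc i))"
      "?pr be (Suc i) \<in> couplings2 X (Suc i) (?pr lam i) (mu (Suc i))"
      using distr_proj_first_in_couplings2[OF al, of "Suc i"]
        distr_proj_first_in_couplings2[OF be, of "Suc i"] step m by auto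
    have "is_extreme_point (couplings2 X (Suc i) (?pr lam i) (mu (Suc i))) (?pr lam (Suc i))"
    proof -
      have "Suc i \<in> {2..m}" using step by simp
      from bspec[OF extreme this] show ?thesis by simp
    qed
    from extreme_point_mix_eq_point[OF this in_K t lam_proj] show ?case using step m by simp
  qed
qed

theorem mainTheorem3:
  fixes X :: "nat \<Rightarrow> 'a metric" and mu :: "nat \<Rightarrow> 'a measure"
    and N :: nat and lam :: "(nat \<Rightarrow> 'a) measure"
  assumes "N \<ge> 3"
    and "\<forall>k\<in>{1..N}. polish_metric (X k)"
    and "\<forall>k\<in>{1..N}. prob_space (mu k) \<and> sets (mu k) = sets (Xsp X k)"
    and "lam \<in> couplings X N mu"
    and "is_extreme_point
           (couplings2 X N (distr lam (PiM {1..N-1} (Xsp X)) (proj_first (N-1))) (mu N)) lam"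
    and "\<forall>j\<in>{2..N-1}. is_extreme_point
           (couplings2 X j (distr lam (PiM {1..j-1} (Xsp X)) (proj_first (j-1))) (mu j))
           (distr lam (PiM {1..j} (Xsp X)) (proj_first j))"
  shows "is_extreme_point (couplings X N mu) lam"
  unfolding is_extreme_point_def
proof (intro conjI notI)
  show "lam \<in> couplings X N mu" by fact
next
  assume "\<exists>al\<in>couplings X N mu. \<exists>be\<in>couplings X N mu.
    \<exists>t. 0 < t \<and> t < 1 \<and> al \<noteq> be \<and> lam = mix_measure t al be"
  then obtain al be t where al: "al \<in> couplings X N mu" and be: "be \<in> couplings X N mu"
    and t: "0 < t" "t < 1" and "al \<noteq> be" and lam: "lam = mix_measure t al be"
    by blast
  have "distr al (PiM {1..N-1} (Xsp X)) (proj_first (N-1)) = distr lam (PiM {1..N-1} (Xsp X)) (proj_first (N-1))"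
    "distr be (PiM {1..N-1} (Xsp X)) (proj_first (N-1)) = distr lam (PiM {1..N-1} (Xsp X)) (proj_first (N-1))"
    using proj_first_eq_of_mix_couplings[OF al be t lam assms(6), of "N-1"] assms(1) by auto
  then have "al \<in> couplings2 X N (distr lam (PiM {1..N-1} (Xsp X)) (proj_first (N-1))) (mu N)"
    "be \<in> couplings2 X N (distr lam (PiM {1..N-1} (Xsp X)) (proj_first (N-1))) (mu N)"
    using couplings_in_couplings2[OF al] couplings_in_couplings2[OF be] assms(1) by auto
  with extreme_point_mix_eq[OF assms(5) _ _ t lam] show False using \<open>al \<noteq> be\<close> by blast
qed

end
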